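(* Let $n\geq 1$ and $\mathfrak g=sl(n+1,\mathbb C)$. For $(p,q)=(p_1,\dots,p_n,q_1,\dots,q_n)\in\mathbb C^{2n}$ let $$\Psi(p,q)=\begin{pmatrix}-\sum_{j=1}^n p_jq_j & q_1&\cdots&q_n\\ -p_1\sum_{j=1}^n p_jq_j & p_1q_1&\cdots&p_1q_n\\ \vdots&\vdots&&\vdots\\ -p_n\sum_{j=1}^n p_jq_j& p_nq_1&\cdots&p_nq_n\end{pmatrix},$$ and for $X\in\mathfrak g$ let $\tilde X\in\mathbb C[p,q]$ be the polynomial $\tilde X(p,q)=\operatorname{Tr}(\Psi(p,q)X)$. Then: (1) for all $X,Y\in\mathfrak g$, $[\tilde X,\tilde Y]_\ast=\{\tilde X,\tilde Y\}=\widetilde{[X,Y]}$; (2) the map $\rho_0:X\mapsto W(i\tilde X)$ is a representation of $\mathfrak g$ on $\mathcal P$, i.e. $\rho_0$ is linear and $\rho_0([X,Y])=\rho_0(X)\rho_0(Y)-\rho_0(Y)\rho_0(X)$ for all $X,Y\in\mathfrak g$.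
   Context: Write $x=(x_1,\dots,x_{2n})=(p_1,\dots,p_n,q_1,\dots,q_n)$ and let $\Lambda^{ij}$ ($1\le i,j\le 2n$) be given by $\Lambda^{k,n+k}=1$, $\Lambda^{n+k,k}=-1$ for $1\le k\le n$, and $\Lambda^{ij}=0$ otherwise. For polynomials $u,v\in\mathbb C[p,q]$ set $P^0(u,v)=uv$ and for $l\ge1$, $P^l(u,v)=\sum \Lambda^{i_1j_1}\cdots\Lambda^{i_lj_l}\,\partial^l_{x_{i_1}\cdots x_{i_l}}u\;\partial^l_{x_{j_1}\cdots x_{j_l}}v$ (sum over all $i_1,\dots,i_l,j_1,\dots,j_l\in\{1,\dots,2n\}$). The Poisson bracket is $\{u,v\}=P^1(u,v)=\sum_{k=1}^n(\partial_{p_k}u\,\partial_{q_k}v-\partial_{q_k}u\,\partial_{p_k}v)$. The Moyal bracket (at parameter $t=-i/2$) is $[u,v]_\ast=\sum_{l\ge0}\frac{(-1/4)^l}{(2l+1)!}P^{2l+1}(u,v)$. $\mathcal P=\mathbb C[p_1,\dots,p_n]$ is the space of complex polynomials in $p$. The Weyl correspondence $W$ assigns to each polynomial in $(p,q)$ a linear operator on $\mathcal P$, defined by linearity from: for a polynomial $u(p)$ and a multi-index $\alpha\in\mathbb N^n$, $(W(u(p)q^\alpha)\varphi)(p)=\big(i\partial_s\big)^{\alpha}\big(u(p+\tfrac12 s)\varphi(p+s)\big)\big|_{s=0}$, where $s=(s_1,\dots,s_n)$ and $(i\partial_s)^\alpha=\prod_k (i\partial_{s_k})^{\alpha_k}$.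 *)

theory Defs
  imports Complex_Main "HOL-Analysis.Derivative" "HOL-Library.Poly_Mapping" "Jordan_Normal_Form.Matrix"
begin

text \<open>Variable index k < n stands for p_{k+1},
index n+k (k < n) stands for q_{k+1}.\<close>

type_synonym cpoly = "(nat \<Rightarrow>\<^sub>0 nat) \<Rightarrow>\<^sub>0 complex"

definition pvar :: "nat \<Rightarrow> cpoly" where
  "pvar i = Poly_Mapping.single (Poly_Mapping.single i 1) 1"

definition pconst :: "complex \<Rightarrow> cpoly" where
  "pconst c = Poly_Mapping.single 0 c"

definition peval :: "cpoly \<Rightarrow> (nat \<Rightarrow> complex) \<Rightarrow> complex" where
  "peval f x = (\<Sum>m\<in>Poly_Mapping.keys f. Poly_Mapping.lookup f m * (\<Prod>i\<in>Poly_Mapping.keys (m::nat \<Rightarrow>\<^sub>0 nat). x i ^ Poly_Mapping.lookup m i))"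

definition pd :: "nat \<Rightarrow> ((nat \<Rightarrow> complex) \<Rightarrow> complex) \<Rightarrow> (nat \<Rightarrow> complex) \<Rightarrow> complex" where
  "pd i u x = deriv (\<lambda>t. u (x(i := t))) (x i)"

fun pdl :: "nat list \<Rightarrow> ((nat \<Rightarrow> complex) \<Rightarrow> complex) \<Rightarrow> (nat \<Rightarrow> complex) \<Rightarrow> complex" where
  "pdl [] u = u"
| "pdl (i # is) u = pd i (pdl is u)"

definition Lam :: "nat \<Rightarrow> nat \<Rightarrow> nat \<Rightarrow> complex" where
  "Lam n i j = (if i < n \<and> j = n + i then 1 else if j < n \<and> i = n + j then -1 else 0)"

definition Pl :: "nat \<Rightarrow> nat \<Rightarrow> ((nat \<Rightarrow> complex) \<Rightarrow> complex) \<Rightarrow> ((nat \<Rightarrow> complex) \<Rightarrow> complex)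
    \<Rightarrow> (nat \<Rightarrow> complex) \<Rightarrow> complex" where
  "Pl n l u v x = (\<Sum>is\<in>{xs. set xs \<subseteq> {..<2*n} \<and> length xs = l}.
                   \<Sum>js\<in>{xs. set xs \<subseteq> {..<2*n} \<and> length xs = l}.
                     (\<Prod>r<l. Lam n (is ! r) (js ! r)) * pdl is u x * pdl js v x)"

definition poisson :: "nat \<Rightarrow> ((nat \<Rightarrow> complex) \<Rightarrow> complex) \<Rightarrow> ((nat \<Rightarrow> complex) \<Rightarrow> complex)
    \<Rightarrow> (nat \<Rightarrow> complex) \<Rightarrow> complex" where
  "poisson n u v x = (\<Sum>k<n. pd k u x * pd (n + k) v x - pd (n + k) u x * pd k v x)"

definition moyal :: "nat \<Rightarrow> ((nat \<Rightarrow> complex) \<Rightarrow> complex) \<Rightarrow> ((nat \<Rightarrow> complex) \<Rightarrow> complex)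
    \<Rightarrow> (nat \<Rightarrow> complex) \<Rightarrow> complex" where
  "moyal n u v x = suminf (\<lambda>l::nat. (-1/4 :: complex) ^ l / fact (2*l+1) * Pl n (2*l+1) u v x)"

definition Pspace :: "nat \<Rightarrow> ((nat \<Rightarrow> complex) \<Rightarrow> complex) set" where
  "Pspace n = {peval f | f. \<forall>m\<in>Poly_Mapping.keys f. \<forall>i\<in>Poly_Mapping.keys m. i < n}"

text \<open>Multi-index alpha of the q-part of a monomial, as a list of differentiation indices.\<close>
definition qalpha :: "nat \<Rightarrow> (nat \<Rightarrow>\<^sub>0 nat) \<Rightarrow> nat list" where
  "qalpha n m = concat (map (\<lambda>k. replicate (Poly_Mapping.lookup m (n + k)) k) [0..<n])"

text \<open>W(u(p) q^alpha) phi (p) = (i d_s)^alpha (u(p + s/2) phi(p + s)) at s = 0,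
  extended linearly over the monomials (with u(p) = p^beta).\<close>
definition Weyl :: "nat \<Rightarrow> cpoly \<Rightarrow> ((nat \<Rightarrow> complex) \<Rightarrow> complex) \<Rightarrow> (nat \<Rightarrow> complex) \<Rightarrow> complex" where
  "Weyl n f \<phi> p = (\<Sum>m\<in>Poly_Mapping.keys f. Poly_Mapping.lookup f m *
      \<i> ^ length (qalpha n m) *
      pdl (qalpha n m)
        (\<lambda>s. (\<Prod>k<n. (p k + s k / 2) ^ Poly_Mapping.lookup m k) * \<phi> (\<lambda>k. p k + s k)) (\<lambda>_. 0))"

definition sl :: "nat \<Rightarrow> complex mat set" where
  "sl n = {X. X \<in> carrier_mat (n+1) (n+1) \<and> (\<Sum>i\<le>n. X $$ (i, i)) = 0}"

definition psum :: "nat \<Rightarrow> cpoly" where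
  "psum n = (\<Sum>j<n. pvar j * pvar (n + j))"

text \<open>Entries of Psi (0-based rows/columns 0..n); row/column index a >= 1 refers to p_a / q_a.\<close>
definition Psi :: "nat \<Rightarrow> nat \<Rightarrow> nat \<Rightarrow> cpoly" where
  "Psi n a b =
     (if a = 0 \<and> b = 0 then - psum n
      else if a = 0 then pvar (n + (b - 1))
      else if b = 0 then - (pvar (a - 1) * psum n)
      else pvar (a - 1) * pvar (n + (b - 1)))"

definition tilde :: "nat \<Rightarrow> complex mat \<Rightarrow> cpoly" where
  "tilde n X = (\<Sum>a\<le>n. \<Sum>b\<le>n. Psi n a b * pconst (X $$ (b, a)))"

definition rho0 :: "nat \<Rightarrow> complex mat \<Rightarrow> ((nat \<Rightarrow> complex) \<Rightarrow> complex) \<Rightarrow> (nat \<Rightarrow> complex) \<Rightarrow> complex" where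
  "rho0 n X = Weyl n (pconst \<i> * tilde n X)"

end

theory Submission
  imports Defs
begin

text \<open>Since \<open>\<Psi>(p,q)\<close> is the rank-one matrix \<open>(1,p)\<^sup>T(-\<langle>p,q\<rangle>, q)\<close>, every \<open>tilde n X\<close> has degree at
  most one in \<open>q\<close>. Every nonzero term of \<open>P\<^sup>l\<close> differentiates \<open>l\<close> times in \<open>q\<close> in total, so all terms
  with \<open>l \<ge> 3\<close> vanish and the Moyal bracket of such functions is their Poisson bracket. The
  entries \<open>\<Psi>\<^sub>a\<^sub>b = P\<^sub>a Q\<^sub>b\<close> Poisson-commute like the matrix units of \<open>gl(n+1)\<close>, and a
  bilinear bracket with these relations is carried by \<open>X \<mapsto> \<Sum> X\<^sub>b\<^sub>a \<Psi>\<^sub>a\<^sub>b\<close> to the matrix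
  commutator. For the representation, the Weyl quantization of each \<open>i\<Psi>\<^sub>a\<^sub>b\<close> is computed
  explicitly as a first order differential operator on \<open>\<complex>[p]\<close>; these operators satisfy the same
  relations, which gives \<open>\<rho>\<^sub>0([X,Y]) = [\<rho>\<^sub>0(X), \<rho>\<^sub>0(Y)]\<close>.\<close>

type_synonym cfun = "(nat \<Rightarrow> complex) \<Rightarrow> complex"

section \<open>Polynomial functions and their partial derivatives\<close>

inductive polyfun :: "nat set \<Rightarrow> cfun \<Rightarrow> bool" for V where
  const: "polyfun V (\<lambda>x. c)"
| var: "i \<in> V \<Longrightarrow> polyfun V (\<lambda>x. x i)"
| add: "polyfun V f \<Longrightarrow> polyfun V g \<Longrightarrow> polyfun V (\<lambda>x. f x + g x)"
| mult: "polyfun V f \<Longrightarrow> polyfun V g \<Longrightarrow> polyfun V (\<lambda>x. f x * g x)"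

lemma polyfun_mono: "polyfun V f \<Longrightarrow> V \<subseteq> W \<Longrightarrow> polyfun W f"
  by (induction rule: polyfun.induct) (auto intro: polyfun.intros)

lemma polyfun_uminus: "polyfun V f \<Longrightarrow> polyfun V (\<lambda>x. - f x)"
  using polyfun.mult[OF polyfun.const[of V "-1"]] by fastforce

lemma polyfun_sum:
  "finite A \<Longrightarrow> (\<And>a. a \<in> A \<Longrightarrow> polyfun V (f a)) \<Longrightarrow> polyfun V (\<lambda>x. \<Sum>a\<in>A. f a x)"
  by (induction A rule: finite_induct) (auto intro: polyfun.intros)

lemma polyfun_prod:
  "finite A \<Longrightarrow> (\<And>a. a \<in> A \<Longrightarrow> polyfun V (f a)) \<Longrightarrow> polyfun V (\<lambda>x. \<Prod>a\<in>A. f a x)"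
  by (induction A rule: finite_induct) (auto intro: polyfun.intros)

lemma polyfun_power: "polyfun V f \<Longrightarrow> polyfun V (\<lambda>x. f x ^ k)"
  by (induction k) (auto intro: polyfun.intros)

lemma pd_eqI:
  assumes "\<And>x. ((\<lambda>t. f (x(i := t))) has_field_derivative g x) (at (x i))"
  shows "pd i f = g"
  using assms unfolding pd_def by (auto intro!: ext DERIV_imp_deriv)

lemma polyfun_pd_has_derivative:
  assumes "polyfun V f"
  shows "polyfun V (pd i f) \<and> (\<forall>x. ((\<lambda>t. f (x(i := t))) has_field_derivative pd i f x) (at (x i)))"
  using assms
proof induction
  case (const c)
  have "pd i (\<lambda>x. c) = (\<lambda>x. 0)" by (rule pd_eqI) auto
  then show ?case by (auto intro: polyfun.const)
next
  case (var j)
  have d: "((\<lambda>t. (x(i := t)) j) has_field_derivative (if i = j then 1 else 0)) (at (x i))" for x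
    by (cases "i = j") auto
  then have "pd i (\<lambda>x. x j) = (\<lambda>x. if i = j then 1 else 0)" by (rule pd_eqI)
  with d show ?case by (auto intro: polyfun.const)
next
  case (add f g)
  have d: "((\<lambda>t. f (x(i := t)) + g (x(i := t))) has_field_derivative pd i f x + pd i g x) (at (x i))" for x
    using add.IH by (intro DERIV_add) blast+
  moreover from d have "pd i (\<lambda>x. f x + g x) = (\<lambda>x. pd i f x + pd i g x)" by (rule pd_eqI)
  ultimately show ?case using add.IH by (auto intro: polyfun.add simp del: fun_upd_apply)
next
  case (mult f g)
  have d: "((\<lambda>t. f (x(i := t)) * g (x(i := t))) has_field_derivative pd i f x * g x + pd i g x * f x) (at (x i))" for x
    using DERIV_mult[of "\<lambda>t. f (x(i := t))" "pd i f x" "x i" UNIV "\<lambda>t. g (x(i := t))" "pd i g x"] mult.IH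
    by simp
  moreover from d have "pd i (\<lambda>x. f x * g x) = (\<lambda>x. pd i f x * g x + pd i g x * f x)" by (rule pd_eqI)
  ultimately show ?case using mult by (auto intro: polyfun.add polyfun.mult simp del: fun_upd_apply)
qed

lemma polyfun_pd: "polyfun V f \<Longrightarrow> polyfun V (pd i f)"
  using polyfun_pd_has_derivative by blast

lemma polyfun_has_pd: "polyfun V f \<Longrightarrow> ((\<lambda>t. f (x(i := t))) has_field_derivative pd i f x) (at (x i))"
  using polyfun_pd_has_derivative by blast

lemma polyfun_pdl: "polyfun V u \<Longrightarrow> polyfun V (pdl is u)"
  by (induction "is") (auto intro: polyfun_pd)

lemma pd_const [simp]: "pd i (\<lambda>x. c) = (\<lambda>x. 0)"
  by (rule pd_eqI) auto

lemma pd_var: "pd i (\<lambda>x. x j) = (\<lambda>x. if i = j then 1 else 0)"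
  by (rule pd_eqI) (cases "i = j"; auto)

lemma pd_add: "polyfun V f \<Longrightarrow> polyfun V g \<Longrightarrow> pd i (\<lambda>x. f x + g x) = (\<lambda>x. pd i f x + pd i g x)"
  by (rule pd_eqI) (auto intro!: DERIV_add polyfun_has_pd)

lemma pd_mult:
  "polyfun V f \<Longrightarrow> polyfun V g \<Longrightarrow> pd i (\<lambda>x. f x * g x) = (\<lambda>x. pd i f x * g x + f x * pd i g x)"
  by (rule pd_eqI) (auto intro!: derivative_eq_intros polyfun_has_pd simp: mult.commute)

lemma pd_cmult: "polyfun V f \<Longrightarrow> pd i (\<lambda>x. c * f x) = (\<lambda>x. c * pd i f x)"
  using pd_mult[OF polyfun.const[of V c], of f i] by simp

lemma pd_uminus: "polyfun V f \<Longrightarrow> pd i (\<lambda>x. - f x) = (\<lambda>x. - pd i f x)"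
  using pd_cmult[of V f i "-1"] by simp

lemma pd_sum:
  "finite A \<Longrightarrow> (\<And>a. a \<in> A \<Longrightarrow> polyfun V (f a)) \<Longrightarrow>
     pd i (\<lambda>x. \<Sum>a\<in>A. f a x) = (\<lambda>x. \<Sum>a\<in>A. pd i (f a) x)"
proof (induction A rule: finite_induct)
  case (insert a A)
  then have "pd i (\<lambda>x. f a x + (\<Sum>a\<in>A. f a x)) = (\<lambda>x. pd i (f a) x + pd i (\<lambda>x. \<Sum>a\<in>A. f a x) x)"
    by (intro pd_add[of V] polyfun_sum) auto
  with insert show ?case by simp
qed simp

lemma pd_commute: "polyfun V f \<Longrightarrow> pd i (pd j f) = pd j (pd i f)"
proof (induction rule: polyfun.induct)
  case (var k)
  then show ?case by (simp add: pd_var)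
next
  case (add f g)
  then show ?case by (simp add: pd_add[of V] polyfun_pd)
next
  case (mult f g)
  then show ?case
    by (simp add: pd_mult[of V] pd_add[of V] polyfun_pd polyfun.mult algebra_simps)
qed simp

lemma pd_pdl_commute: "polyfun V u \<Longrightarrow> pd i (pdl is u) = pdl is (pd i u)"
  by (induction "is") (auto simp: pd_commute[OF polyfun_pdl])

definition monom_eval :: "(nat \<Rightarrow>\<^sub>0 nat) \<Rightarrow> cfun" where
  "monom_eval m x = (\<Prod>i\<in>Poly_Mapping.keys m. x i ^ Poly_Mapping.lookup m i)"

lemma monom_eval_superset:
  assumes "finite S" "Poly_Mapping.keys m \<subseteq> S"
  shows "monom_eval m x = (\<Prod>i\<in>S. x i ^ Poly_Mapping.lookup m i)"
  unfolding monom_eval_def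
  by (rule prod.mono_neutral_left) (use assms in \<open>auto simp: in_keys_iff\<close>)

lemma monom_eval_add: "monom_eval (m1 + m2) x = monom_eval m1 x * monom_eval m2 x"
proof -
  let ?S = "Poly_Mapping.keys m1 \<union> Poly_Mapping.keys m2"
  have "monom_eval (m1 + m2) x = (\<Prod>i\<in>?S. x i ^ Poly_Mapping.lookup (m1 + m2) i)"
    by (rule monom_eval_superset) (auto simp: keys_add)
  also have "\<dots> = (\<Prod>i\<in>?S. x i ^ Poly_Mapping.lookup m1 i) * (\<Prod>i\<in>?S. x i ^ Poly_Mapping.lookup m2 i)"
    by (simp add: lookup_add power_add prod.distrib)
  also have "\<dots> = monom_eval m1 x * monom_eval m2 x"
    by (subst (1 2) monom_eval_superset[of ?S]) auto
  finally show ?thesis .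
qed

definition lin_ext :: "((nat \<Rightarrow>\<^sub>0 nat) \<Rightarrow> complex) \<Rightarrow> cpoly \<Rightarrow> complex" where
  "lin_ext h f = (\<Sum>m\<in>Poly_Mapping.keys f. Poly_Mapping.lookup f m * h m)"

lemma lin_ext_superset:
  assumes "finite S" "Poly_Mapping.keys f \<subseteq> S"
  shows "lin_ext h f = (\<Sum>m\<in>S. Poly_Mapping.lookup f m * h m)"
  unfolding lin_ext_def
  by (rule sum.mono_neutral_left) (use assms in \<open>auto simp: in_keys_iff\<close>)

lemma lin_ext_add: "lin_ext h (f + g) = lin_ext h f + lin_ext h g"
proof -
  let ?S = "Poly_Mapping.keys f \<union> Poly_Mapping.keys g"
  have "lin_ext h (f + g) = (\<Sum>m\<in>?S. Poly_Mapping.lookup (f + g) m * h m)"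
    by (rule lin_ext_superset) (auto simp: keys_add)
  also have "\<dots> = (\<Sum>m\<in>?S. Poly_Mapping.lookup f m * h m) + (\<Sum>m\<in>?S. Poly_Mapping.lookup g m * h m)"
    by (simp add: lookup_add distrib_right sum.distrib)
  also have "\<dots> = lin_ext h f + lin_ext h g"
    by (subst (1 2) lin_ext_superset[of ?S]) auto
  finally show ?thesis .
qed

lemma lin_ext_zero [simp]: "lin_ext h 0 = 0"
  by (simp add: lin_ext_def)

lemma lin_ext_single [simp]: "lin_ext h (Poly_Mapping.single m c) = c * h m"
  by (simp add: lin_ext_def)

lemma lin_ext_uminus: "lin_ext h (- f) = - lin_ext h f"
  by (simp add: lin_ext_def sum_negf)

lemma lin_ext_sum: "lin_ext h (\<Sum>i\<in>I. f i) = (\<Sum>i\<in>I. lin_ext h (f i))"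
  by (induction I rule: infinite_finite_induct) (simp_all add: lin_ext_add)

lemma poly_mapping_sum_single:
  "f = (\<Sum>m\<in>Poly_Mapping.keys f. Poly_Mapping.single m (Poly_Mapping.lookup f m))"
  by (rule poly_mapping_eqI) (auto simp: lookup_sum lookup_single when_def in_keys_iff sum.delta')

lemma lin_ext_mult:
  assumes h: "\<And>m1 m2. h (m1 + m2) = h m1 * h m2"
  shows "lin_ext h (f * g) = lin_ext h f * lin_ext h g"
proof -
  have "f * g = (\<Sum>a\<in>Poly_Mapping.keys f. \<Sum>b\<in>Poly_Mapping.keys g.
      Poly_Mapping.single a (Poly_Mapping.lookup f a) * Poly_Mapping.single b (Poly_Mapping.lookup g b))"
    by (subst (1) poly_mapping_sum_single, subst (1) poly_mapping_sum_single[of g]) (simp add: sum_product)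
  then have "lin_ext h (f * g) = (\<Sum>a\<in>Poly_Mapping.keys f. \<Sum>b\<in>Poly_Mapping.keys g.
       Poly_Mapping.lookup f a * Poly_Mapping.lookup g b * h (a + b))"
    by (simp add: lin_ext_sum mult_single)
  also have "\<dots> = lin_ext h f * lin_ext h g"
    by (simp add: lin_ext_def h sum_product algebra_simps)
  finally show ?thesis .
qed

lemma lin_ext_pconst_mult: "lin_ext h (pconst c * f) = c * lin_ext h f"
proof -
  have "pconst c * f = (\<Sum>m\<in>Poly_Mapping.keys f. Poly_Mapping.single m (c * Poly_Mapping.lookup f m))"
    by (subst poly_mapping_sum_single[of f]) (simp add: pconst_def sum_distrib_left mult_single)
  then have "lin_ext h (pconst c * f) = (\<Sum>m\<in>Poly_Mapping.keys f. c * Poly_Mapping.lookup f m * h m)"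
    by (simp add: lin_ext_sum)
  then show ?thesis
    by (simp add: lin_ext_def sum_distrib_left mult.assoc)
qed

lemma lin_ext_mult_pconst: "lin_ext h (f * pconst c) = c * lin_ext h f"
  by (simp add: mult.commute[of f] lin_ext_pconst_mult)

lemma peval_eq_lin_ext: "peval f x = lin_ext (\<lambda>m. monom_eval m x) f"
  by (simp add: peval_def lin_ext_def monom_eval_def)

lemma peval_add: "peval (f + g) = (\<lambda>x. peval f x + peval g x)"
  by (simp add: fun_eq_iff peval_eq_lin_ext lin_ext_add)

lemma peval_mult: "peval (f * g) = (\<lambda>x. peval f x * peval g x)"
  by (simp add: fun_eq_iff peval_eq_lin_ext lin_ext_mult monom_eval_add)

lemma peval_uminus: "peval (- f) = (\<lambda>x. - peval f x)"
  by (simp add: fun_eq_iff peval_eq_lin_ext lin_ext_uminus)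

lemma peval_sum: "peval (\<Sum>i\<in>I. f i) = (\<lambda>x. \<Sum>i\<in>I. peval (f i) x)"
  by (simp add: fun_eq_iff peval_eq_lin_ext lin_ext_sum)

lemma peval_pconst: "peval (pconst c) = (\<lambda>x. c)"
  by (simp add: fun_eq_iff peval_eq_lin_ext pconst_def monom_eval_def)

lemma peval_pvar: "peval (pvar i) = (\<lambda>x. x i)"
  by (simp add: fun_eq_iff peval_eq_lin_ext pvar_def monom_eval_def)

lemma polyfun_peval:
  assumes "\<forall>m\<in>Poly_Mapping.keys f. \<forall>i\<in>Poly_Mapping.keys m. i \<in> V"
  shows "polyfun V (peval f)"
  unfolding peval_def[abs_def] using assms
  by (auto intro!: polyfun_sum polyfun_prod polyfun_power polyfun.mult polyfun.const polyfun.var)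

lemma polyfun_imp_Pspace: "polyfun {..<n} \<phi> \<Longrightarrow> \<phi> \<in> Pspace n"
proof (induction rule: polyfun.induct)
  case (const c)
  show ?case unfolding Pspace_def
    by (intro CollectI exI[of _ "pconst c"]) (simp add: peval_pconst, simp add: pconst_def)
next
  case (var i)
  then show ?case unfolding Pspace_def
    by (intro CollectI exI[of _ "pvar i"]) (simp add: peval_pvar, simp add: pvar_def)
next
  case (add f g)
  then obtain a b where "f = peval a" "\<forall>m\<in>Poly_Mapping.keys a. \<forall>i\<in>Poly_Mapping.keys m. i < n"
    and "g = peval b" "\<forall>m\<in>Poly_Mapping.keys b. \<forall>i\<in>Poly_Mapping.keys m. i < n"
    unfolding Pspace_def by auto
  with keys_add[of a b] show ?case unfolding Pspace_def
    by (intro CollectI exI[of _ "a + b"]) (auto simp: peval_add)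
next
  case (mult f g)
  then obtain a b where a: "f = peval a" "\<forall>m\<in>Poly_Mapping.keys a. \<forall>i\<in>Poly_Mapping.keys m. i < n"
    and b: "g = peval b" "\<forall>m\<in>Poly_Mapping.keys b. \<forall>i\<in>Poly_Mapping.keys m. i < n"
    unfolding Pspace_def by auto
  have "\<forall>m\<in>Poly_Mapping.keys (a * b). \<forall>i\<in>Poly_Mapping.keys m. i < n"
  proof (intro ballI)
    fix m i assume m: "m \<in> Poly_Mapping.keys (a * b)" and i: "i \<in> Poly_Mapping.keys m"
    from m keys_mult[of a b] obtain u v
      where "m = u + v" "u \<in> Poly_Mapping.keys a" "v \<in> Poly_Mapping.keys b"
      by blast
    with i keys_add[of u v] a b show "i < n" by blast
  qed
  with a b show ?case unfolding Pspace_def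
    by (intro CollectI exI[of _ "a * b"]) (auto simp: peval_mult)
qed

lemma Pspace_iff_polyfun: "\<phi> \<in> Pspace n \<longleftrightarrow> polyfun {..<n} \<phi>"
proof
  show "\<phi> \<in> Pspace n \<Longrightarrow> polyfun {..<n} \<phi>"
    unfolding Pspace_def by (auto intro!: polyfun_peval)
qed (rule polyfun_imp_Pspace)

section \<open>The matrix \<open>\<Psi>\<close> and the Poisson brackets of its entries\<close>

definition Pvec :: "nat \<Rightarrow> cfun" where
  "Pvec a x = (if a = 0 then 1 else x (a - 1))"

definition pq_pairing :: "nat \<Rightarrow> cfun" where
  "pq_pairing n x = (\<Sum>j<n. x j * x (n + j))"

definition Qvec :: "nat \<Rightarrow> nat \<Rightarrow> cfun" where
  "Qvec n b x = (if b = 0 then - pq_pairing n x else x (n + (b - 1)))"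

definition psi :: "nat \<Rightarrow> nat \<Rightarrow> nat \<Rightarrow> cfun" where
  "psi n a b x = Pvec a x * Qvec n b x"

definition tilde_fun :: "nat \<Rightarrow> complex mat \<Rightarrow> cfun" where
  "tilde_fun n X x = (\<Sum>a\<le>n. \<Sum>b\<le>n. psi n a b x * X $$ (b, a))"

lemma peval_Psi: "peval (Psi n a b) = psi n a b"
  by (auto simp: fun_eq_iff Psi_def psum_def peval_sum peval_uminus peval_mult peval_pvar
      psi_def Pvec_def Qvec_def pq_pairing_def)

lemma peval_tilde: "peval (tilde n X) = tilde_fun n X"
  by (simp add: fun_eq_iff tilde_def peval_sum peval_mult peval_Psi peval_pconst tilde_fun_def)

lemma polyfun_Pvec: "a \<le> n \<Longrightarrow> polyfun {..<n} (Pvec a)"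
  by (cases "a = 0") (auto simp: Pvec_def[abs_def] intro: polyfun.const polyfun.var)

lemma Qvec_cases: "Qvec n b = (if b = 0 then (\<lambda>x. - pq_pairing n x) else (\<lambda>x. x (n + (b - 1))))"
  by (auto simp: Qvec_def fun_eq_iff)

lemma polyfun_pq_pairing: "polyfun UNIV (pq_pairing n)"
  unfolding pq_pairing_def[abs_def] by (intro polyfun_sum polyfun.mult polyfun.var) auto

lemma polyfun_Qvec: "polyfun UNIV (Qvec n b)"
  by (simp add: Qvec_cases polyfun_uminus polyfun_pq_pairing polyfun.var)

lemma polyfun_psi: "polyfun UNIV (psi n a b)"
  unfolding psi_def[abs_def]
  by (cases "a = 0") (auto simp: Pvec_def intro!: polyfun.mult polyfun_Qvec polyfun.var polyfun.const)

lemma polyfun_tilde_fun: "polyfun UNIV (tilde_fun n X)"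
  unfolding tilde_fun_def[abs_def] by (intro polyfun_sum polyfun.mult polyfun_psi polyfun.const) auto

lemma pd_Pvec: "pd i (Pvec a) x = (if a = Suc i then 1 else 0)"
  by (cases "a = 0") (auto simp: Pvec_def[abs_def] pd_var)

lemma pd_pq_pairing:
  "pd i (pq_pairing n) x = (\<Sum>j<n. (if i = j then x (n + j) else 0) + (if i = n + j then x j else 0))"
  unfolding pq_pairing_def[abs_def]
  by (simp add: pd_sum[of _ UNIV] pd_mult[of UNIV] polyfun.mult polyfun.var pd_var)
    (intro sum.cong; simp)

lemma pd_pq_pairing_p: "k < n \<Longrightarrow> pd k (pq_pairing n) x = x (n + k)"
  by (simp add: pd_pq_pairing sum.distrib sum.delta)

lemma pd_pq_pairing_q: "k < n \<Longrightarrow> pd (n + k) (pq_pairing n) x = x k"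
  by (simp add: pd_pq_pairing sum.distrib sum.delta)

lemma pd_Qvec_p: "k < n \<Longrightarrow> b \<le> n \<Longrightarrow> pd k (Qvec n b) x = (if b = 0 then - x (n + k) else 0)"
  by (auto simp: Qvec_cases pd_uminus[OF polyfun_pq_pairing] pd_pq_pairing_p pd_var)

lemma pd_Qvec_q:
  "k < n \<Longrightarrow> b \<le> n \<Longrightarrow> pd (n + k) (Qvec n b) x = (if b = 0 then - x k else if b = Suc k then 1 else 0)"
  by (auto simp: Qvec_cases pd_uminus[OF polyfun_pq_pairing] pd_pq_pairing_q pd_var)

lemma if_one_zero_mult: "(if P then 1 else 0) * (y::complex) = (if P then y else 0)"
  and mult_if_one_zero: "(y::complex) * (if P then 1 else 0) = (if P then y else 0)"
  by simp_all

lemma sum_if_Suc_eq: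
  "(\<Sum>k<n. if a = Suc k then f k else 0) = (if 0 < a \<and> a \<le> n then f (a - 1) else 0)"
  by (cases a) (auto simp: sum.delta)

lemma poisson_antisym: "poisson n f g x = - poisson n g f x"
  unfolding poisson_def by (simp add: sum_negf[symmetric] algebra_simps)

lemma poisson_Pvec_Pvec: "a \<le> n \<Longrightarrow> c \<le> n \<Longrightarrow> poisson n (Pvec a) (Pvec c) x = 0"
  unfolding poisson_def by (simp add: pd_Pvec)

lemma poisson_Pvec_Qvec:
  "a \<le> n \<Longrightarrow> d \<le> n \<Longrightarrow>
     poisson n (Pvec a) (Qvec n d) x = (if a = d then 1 else 0) - (if d = 0 then Pvec a x else 0)"
  unfolding poisson_def
  by (cases "d = 0") (auto simp: pd_Pvec pd_Qvec_q if_one_zero_mult mult_if_one_zero sum_if_Suc_eq sum_negf Pvec_def)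

lemma poisson_Qvec_Qvec:
  "b \<le> n \<Longrightarrow> d \<le> n \<Longrightarrow>
     poisson n (Qvec n b) (Qvec n d) x = (if d = 0 then Qvec n b x else 0) - (if b = 0 then Qvec n d x else 0)"
  unfolding poisson_def
  by (cases "d = 0"; cases "b = 0")
    (auto simp: pd_Qvec_p pd_Qvec_q if_one_zero_mult mult_if_one_zero sum_if_Suc_eq sum_negf Qvec_def pq_pairing_def
      mult.commute)

lemma poisson_mult_left:
  assumes "polyfun V f" "polyfun V g"
  shows "poisson n (\<lambda>x. f x * g x) h x = f x * poisson n g h x + g x * poisson n f h x"
  unfolding poisson_def sum_distrib_left sum.distrib[symmetric]
  by (rule sum.cong) (auto simp: pd_mult[OF assms] algebra_simps)

lemma poisson_mult_right:
  assumes "polyfun V f" "polyfun V g"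
  shows "poisson n h (\<lambda>x. f x * g x) x = f x * poisson n h g x + g x * poisson n h f x"
  using poisson_mult_left[OF assms, of n h x] poisson_antisym[of n h "\<lambda>x. f x * g x" x]
    poisson_antisym[of n h f x] poisson_antisym[of n h g x]
  by (simp add: algebra_simps)

lemma poisson_const_left [simp]: "poisson n (\<lambda>x. c) g x = 0"
  and poisson_const_right [simp]: "poisson n g (\<lambda>x. c) x = 0"
  by (simp_all add: poisson_def)

lemma poisson_cmult_left:
  assumes "polyfun V f"
  shows "poisson n (\<lambda>x. f x * c) g x = poisson n f g x * c"
  using poisson_mult_left[OF assms polyfun.const, where n=n and h=g and x=x] by simp

lemma poisson_cmult_right:
  assumes "polyfun V f"
  shows "poisson n g (\<lambda>x. f x * c) x = poisson n g f x * c"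
  using poisson_mult_right[OF assms polyfun.const, where n=n and h=g and x=x] by simp

lemma poisson_sum_left:
  assumes "finite A" "\<And>a. a \<in> A \<Longrightarrow> polyfun V (f a)"
  shows "poisson n (\<lambda>x. \<Sum>a\<in>A. f a x) g x = (\<Sum>a\<in>A. poisson n (f a) g x)"
  unfolding poisson_def
  by (simp add: pd_sum[OF assms] sum_distrib_right sum_subtractf[symmetric]) (subst sum.swap, simp)

lemma poisson_sum_right:
  assumes "finite A" "\<And>a. a \<in> A \<Longrightarrow> polyfun V (f a)"
  shows "poisson n g (\<lambda>x. \<Sum>a\<in>A. f a x) x = (\<Sum>a\<in>A. poisson n g (f a) x)"
  using poisson_sum_left[OF assms, where n=n and g=g and x=x]
  by (simp add: poisson_antisym[of n g] sum_negf)

lemma poisson_psi: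
  assumes "a \<le> n" "b \<le> n" "c \<le> n" "d \<le> n"
  shows "poisson n (psi n a b) (psi n c d) x =
    (if a = d then psi n c b x else 0) - (if b = c then psi n a d x else 0)"
proof -
  note PQ = polyfun_mono[OF polyfun_Pvec subset_UNIV] polyfun_Qvec
  have "poisson n (psi n a b) (psi n c d) x =
     Pvec a x * (Pvec c x * poisson n (Qvec n b) (Qvec n d) x + Qvec n d x * poisson n (Qvec n b) (Pvec c) x)
   + Qvec n b x * (Pvec c x * poisson n (Pvec a) (Qvec n d) x + Qvec n d x * poisson n (Pvec a) (Pvec c) x)"
    unfolding psi_def[abs_def] using assms
    by (simp add: poisson_mult_left[OF PQ] poisson_mult_right[OF PQ])
  also have "\<dots> = (if a = d then psi n c b x else 0) - (if b = c then psi n a d x else 0)"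
    using assms
    by (simp add: poisson_antisym[of n "Qvec n b" "Pvec c"] poisson_Pvec_Qvec poisson_Qvec_Qvec
        poisson_Pvec_Pvec psi_def)
      (auto simp: algebra_simps)
  finally show ?thesis .
qed

lemma poisson_tilde_fun:
  "poisson n (tilde_fun n X) (tilde_fun n Y) x = (\<Sum>a\<le>n. \<Sum>b\<le>n. (\<Sum>c\<le>n. \<Sum>d\<le>n.
    ((if a = d then psi n c b x else 0) - (if b = c then psi n a d x else 0)) * Y $$ (d, c)) * X $$ (b, a))"
proof -
  have rows: "polyfun UNIV (\<lambda>x. \<Sum>b\<le>n. psi n a b x * X $$ (b, a))" for a X
    by (intro polyfun_sum polyfun.mult polyfun_psi polyfun.const) auto
  have entries: "polyfun UNIV (\<lambda>x. psi n a b x * X $$ (b, a))" for a b X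
    by (intro polyfun.mult polyfun_psi polyfun.const)
  have "poisson n (tilde_fun n X) (tilde_fun n Y) x = (\<Sum>a\<le>n. \<Sum>b\<le>n. (\<Sum>c\<le>n. \<Sum>d\<le>n.
       poisson n (psi n a b) (psi n c d) x * Y $$ (d, c)) * X $$ (b, a))"
    unfolding tilde_fun_def[abs_def]
    by (simp add: poisson_sum_left[OF _ rows] poisson_sum_left[OF _ entries] poisson_sum_right[OF _ rows]
        poisson_sum_right[OF _ entries] poisson_cmult_left[OF polyfun_psi]
        poisson_cmult_right[OF polyfun_psi] poisson_cmult_right[OF polyfun_tilde_fun[unfolded tilde_fun_def[abs_def]]])
  then show ?thesis
    by (simp add: poisson_psi)
qed

section \<open>The bracket relations of \<open>gl(n+1)\<close>\<close>

lemma commutator_mat_index: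
  fixes X Y :: "'a::comm_ring_1 mat"
  assumes "X \<in> carrier_mat (n+1) (n+1)" "Y \<in> carrier_mat (n+1) (n+1)" "b \<le> n" "a \<le> n"
  shows "(X * Y - Y * X) $$ (b, a) = (\<Sum>c\<le>n. X $$ (b, c) * Y $$ (c, a)) - (\<Sum>c\<le>n. Y $$ (b, c) * X $$ (c, a))"
  using assms by (simp add: scalar_prod_def atLeast0LessThan lessThan_Suc_atMost)

lemma sum_reverse3: "(\<Sum>a\<in>A. \<Sum>b\<in>B. \<Sum>c\<in>C. f a b c) = (\<Sum>c\<in>C. \<Sum>b\<in>B. \<Sum>a\<in>A. f a b c)"
  by (subst sum.swap, subst (2) sum.swap) (simp add: sum.swap[of _ C])

text \<open>If a bilinear bracket satisfies \<open>[F\<^sub>a\<^sub>b, F\<^sub>c\<^sub>d] = \<delta>\<^sub>a\<^sub>d F\<^sub>c\<^sub>b - \<delta>\<^sub>b\<^sub>c F\<^sub>a\<^sub>d\<close>, then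
  \<open>X \<mapsto> \<Sum>\<^sub>a\<^sub>b X\<^sub>b\<^sub>a F\<^sub>a\<^sub>b\<close> turns it into the matrix commutator; the left-hand side below is
  the bilinear expansion of \<open>[\<Sum> X\<^sub>b\<^sub>a F\<^sub>a\<^sub>b, \<Sum> Y\<^sub>d\<^sub>c F\<^sub>c\<^sub>d]\<close>.\<close>

lemma gl_bracket_sum:
  fixes X Y :: "'a::comm_ring_1 mat" and F :: "nat \<Rightarrow> nat \<Rightarrow> 'a"
  assumes X: "X \<in> carrier_mat (n+1) (n+1)" and Y: "Y \<in> carrier_mat (n+1) (n+1)"
  shows "(\<Sum>a\<le>n. \<Sum>b\<le>n. (\<Sum>c\<le>n. \<Sum>d\<le>n.
       ((if a = d then F c b else 0) - (if b = c then F a d else 0)) * Y $$ (d, c)) * X $$ (b, a))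
     = (\<Sum>a\<le>n. \<Sum>b\<le>n. F a b * (X * Y - Y * X) $$ (b, a))"
proof -
  have inner: "(\<Sum>c\<le>n. \<Sum>d\<le>n. ((if a = d then F c b else 0) - (if b = c then F a d else 0)) * Y $$ (d, c))
     = (\<Sum>c\<le>n. F c b * Y $$ (a, c)) - (\<Sum>d\<le>n. F a d * Y $$ (d, b))" if "a \<le> n" "b \<le> n" for a b
  proof -
    have "(\<Sum>c\<le>n. \<Sum>d\<le>n. ((if a = d then F c b else 0) - (if b = c then F a d else 0)) * Y $$ (d, c))
      = (\<Sum>c\<le>n. \<Sum>d\<le>n. (if a = d then F c b * Y $$ (d, c) else 0) - (if b = c then F a d * Y $$ (d, c) else 0))"
      by (intro sum.cong refl) (simp add: left_diff_distrib)
    also have "\<dots> = (\<Sum>c\<le>n. F c b * Y $$ (a, c) - (if b = c then \<Sum>d\<le>n. F a d * Y $$ (d, c) else 0))"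
      using that by (intro sum.cong refl) (simp add: sum_subtractf sum.delta)
    finally show ?thesis
      using that by (simp add: sum_subtractf sum.delta)
  qed
  have "(\<Sum>a\<le>n. \<Sum>b\<le>n. (\<Sum>c\<le>n. \<Sum>d\<le>n.
       ((if a = d then F c b else 0) - (if b = c then F a d else 0)) * Y $$ (d, c)) * X $$ (b, a))
     = (\<Sum>a\<le>n. \<Sum>b\<le>n. ((\<Sum>c\<le>n. F c b * Y $$ (a, c)) - (\<Sum>d\<le>n. F a d * Y $$ (d, b))) * X $$ (b, a))"
    by (intro sum.cong refl) (simp add: inner)
  also have "\<dots> = (\<Sum>a\<le>n. \<Sum>b\<le>n. \<Sum>c\<le>n. F c b * Y $$ (a, c) * X $$ (b, a))
       - (\<Sum>a\<le>n. \<Sum>b\<le>n. \<Sum>d\<le>n. F a d * Y $$ (d, b) * X $$ (b, a))"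
    by (simp add: left_diff_distrib sum_distrib_right sum_subtractf)
  also have "\<dots> = (\<Sum>a\<le>n. \<Sum>b\<le>n. \<Sum>c\<le>n. F a b * (X $$ (b, c) * Y $$ (c, a)))
       - (\<Sum>a\<le>n. \<Sum>b\<le>n. \<Sum>c\<le>n. F a b * (Y $$ (b, c) * X $$ (c, a)))"
    by (subst sum_reverse3, subst (2) sum.swap) (simp add: mult_ac)
  also have "\<dots> = (\<Sum>a\<le>n. \<Sum>b\<le>n. F a b * (X * Y - Y * X) $$ (b, a))"
    by (simp add: commutator_mat_index[OF X Y] right_diff_distrib sum_distrib_left sum_subtractf)
  finally show ?thesis .
qed

lemma poisson_tilde:
  assumes "X \<in> carrier_mat (n+1) (n+1)" "Y \<in> carrier_mat (n+1) (n+1)"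
  shows "poisson n (peval (tilde n X)) (peval (tilde n Y)) = peval (tilde n (X * Y - Y * X))"
proof
  fix x
  have "poisson n (tilde_fun n X) (tilde_fun n Y) x = (\<Sum>a\<le>n. \<Sum>b\<le>n. psi n a b x * (X * Y - Y * X) $$ (b, a))"
    unfolding poisson_tilde_fun by (rule gl_bracket_sum[OF assms])
  then show "poisson n (peval (tilde n X)) (peval (tilde n Y)) x = peval (tilde n (X * Y - Y * X)) x"
    by (simp add: peval_tilde tilde_fun_def)
qed

section \<open>The Moyal bracket of functions that are affine in \<open>q\<close>\<close>

definition indep_var :: "nat \<Rightarrow> cfun \<Rightarrow> bool" where
  "indep_var i w \<longleftrightarrow> (\<forall>x t. w (x(i := t)) = w x)"

definition q_free :: "nat \<Rightarrow> cfun \<Rightarrow> bool" where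
  "q_free n w \<longleftrightarrow> (\<forall>i. n \<le> i \<and> i < 2 * n \<longrightarrow> indep_var i w)"

lemma pd_indep_var: "indep_var i w \<Longrightarrow> pd i w = (\<lambda>x. 0)"
  unfolding indep_var_def pd_def by (simp add: fun_eq_iff DERIV_imp_deriv)

lemma indep_var_pd:
  assumes "indep_var i w"
  shows "indep_var i (pd j w)"
proof (cases "j = i")
  case True
  with assms show ?thesis by (simp add: pd_indep_var indep_var_def)
next
  case False
  have "w (x(i := t, j := s)) = w (x(j := s))" for x t s
    using assms fun_upd_twist[OF False, of x s t] unfolding indep_var_def by metis
  with False show ?thesis
    unfolding indep_var_def pd_def by simp
qed

lemma q_free_pdl: "q_free n w \<Longrightarrow> q_free n (pdl is w)"
  by (induction "is") (auto simp: q_free_def intro: indep_var_pd)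

definition count_q :: "nat \<Rightarrow> nat list \<Rightarrow> nat" where
  "count_q n xs = length (filter (\<lambda>i. n \<le> i) xs)"

lemma count_q_simps [simp]:
  "count_q n [] = 0"
  "count_q n (i # xs) = (if n \<le> i then Suc (count_q n xs) else count_q n xs)"
  by (simp_all add: count_q_def)

locale affine_in_q =
  fixes n :: nat and u :: cfun
  assumes polyfun: "polyfun UNIV u"
    and q_free_pd_q: "\<And>j. n \<le> j \<Longrightarrow> j < 2 * n \<Longrightarrow> q_free n (pd j u)"
begin

lemma q_free_pdl_q:
  "set is \<subseteq> {..<2 * n} \<Longrightarrow> 1 \<le> count_q n is \<Longrightarrow> q_free n (pdl is u)"
proof (induction "is")
  case (Cons i rest)
  show ?case
  proof (cases "1 \<le> count_q n rest")
    case True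
    with Cons show ?thesis by (auto simp: q_free_def intro: indep_var_pd)
  next
    case False
    with Cons.prems have "n \<le> i" "i < 2 * n" by (auto split: if_splits)
    then have "q_free n (pdl rest (pd i u))" by (intro q_free_pdl q_free_pd_q)
    then show ?thesis by (simp add: pd_pdl_commute[OF polyfun])
  qed
qed simp

lemma pdl_eq_0:
  "set is \<subseteq> {..<2 * n} \<Longrightarrow> 2 \<le> count_q n is \<Longrightarrow> pdl is u = (\<lambda>x. 0)"
proof (induction "is")
  case (Cons i rest)
  show ?case
  proof (cases "n \<le> i")
    case True
    with Cons.prems have "q_free n (pdl rest u)" "i < 2 * n" by (auto intro!: q_free_pdl_q)
    with True show ?thesis by (simp add: q_free_def pd_indep_var)
  next
    case False
    with Cons show ?thesis by auto
  qed
qed simp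

end

lemma sum_lessThan_double: "(\<Sum>i<2 * (n::nat). f i) = (\<Sum>i<n. f i) + (\<Sum>i<n. f (n + i))"
proof -
  have "(\<Sum>i<n + m. f i) = (\<Sum>i<n. f i) + (\<Sum>i<m. f (n + i))" for m :: nat
    by (induction m) (simp_all add: add_ac)
  then show ?thesis by (simp add: mult_2)
qed

lemma sum_Lam_p_row: "k < n \<Longrightarrow> (\<Sum>j<2 * n. Lam n k j * g j) = g (n + k)"
proof -
  assume "k < n"
  then have "(\<Sum>j<2 * n. Lam n k j * g j) = (\<Sum>j<2 * n. if j = n + k then g j else 0)"
    by (intro sum.cong) (auto simp: Lam_def)
  with \<open>k < n\<close> show ?thesis by (simp add: sum.delta')
qed

lemma sum_Lam_q_row: "k < n \<Longrightarrow> (\<Sum>j<2 * n. Lam n (n + k) j * g j) = - g k"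
proof -
  assume "k < n"
  then have "(\<Sum>j<2 * n. Lam n (n + k) j * g j) = (\<Sum>j<2 * n. if j = k then - g j else 0)"
    by (intro sum.cong) (auto simp: Lam_def)
  with \<open>k < n\<close> show ?thesis by (simp add: sum.delta')
qed

lemma Pl_1_eq_poisson: "Pl n 1 u v x = poisson n u v x"
proof -
  have singletons: "{xs. set xs \<subseteq> {..<2 * n} \<and> length xs = 1} = (\<lambda>i. [i]) ` {..<2 * n}"
    by (auto simp: length_Suc_conv)
  have "Pl n 1 u v x = (\<Sum>i<2 * n. pd i u x * (\<Sum>j<2 * n. Lam n i j * pd j v x))"
    unfolding Pl_def singletons
    by (simp add: sum.reindex inj_on_def sum_distrib_left mult_ac)
  also have "\<dots> = poisson n u v x"
    by (subst sum_lessThan_double[where f = "\<lambda>i. pd i u x * (\<Sum>j<2 * n. Lam n i j * pd j v x)"])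
      (simp add: sum_Lam_p_row sum_Lam_q_row poisson_def sum_subtractf sum_negf)
  finally show ?thesis .
qed

lemma count_q_ge_if_Lam_prod_nonzero:
  assumes "length is = l" "length js = l" "(\<Prod>r<l. Lam n (is ! r) (js ! r)) \<noteq> 0"
  shows "l \<le> count_q n is + count_q n js"
proof -
  have count: "count_q n xs = card {r. r < length xs \<and> n \<le> xs ! r}" for xs
    unfolding count_q_def by (simp add: length_filter_conv_card)
  have "n \<le> is ! r \<or> n \<le> js ! r" if "r < l" for r
  proof -
    from assms(3) that have "Lam n (is ! r) (js ! r) \<noteq> 0" by auto
    then show ?thesis by (auto simp: Lam_def split: if_splits)
  qed
  then have "{..<l} \<subseteq> {r. r < l \<and> n \<le> is ! r} \<union> {r. r < l \<and> n \<le> js ! r}" by auto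
  then have "card {..<l} \<le> card ({r. r < l \<and> n \<le> is ! r} \<union> {r. r < l \<and> n \<le> js ! r})"
    by (intro card_mono) auto
  also have "\<dots> \<le> card {r. r < l \<and> n \<le> is ! r} + card {r. r < l \<and> n \<le> js ! r}"
    by (rule card_Un_le)
  finally show ?thesis using assms by (simp add: count)
qed

lemma Pl_eq_0_if_affine_in_q:
  assumes "affine_in_q n u" "affine_in_q n v" "3 \<le> l"
  shows "Pl n l u v x = 0"
  unfolding Pl_def
proof (intro sum.neutral ballI)
  fix "is" js
  assume "is": "is \<in> {xs. set xs \<subseteq> {..<2 * n} \<and> length xs = l}"
    and js: "js \<in> {xs. set xs \<subseteq> {..<2 * n} \<and> length xs = l}"
  show "(\<Prod>r<l. Lam n (is ! r) (js ! r)) * pdl is u x * pdl js v x = 0"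
  proof (cases "(\<Prod>r<l. Lam n (is ! r) (js ! r)) = 0")
    case False
    with "is" js have "l \<le> count_q n is + count_q n js"
      by (intro count_q_ge_if_Lam_prod_nonzero) auto
    with \<open>3 \<le> l\<close> have "2 \<le> count_q n is \<or> 2 \<le> count_q n js" by linarith
    with "is" js show ?thesis
      using affine_in_q.pdl_eq_0[OF assms(1), of "is"] affine_in_q.pdl_eq_0[OF assms(2), of js] by auto
  qed simp
qed

lemma moyal_eq_poisson_if_affine_in_q:
  assumes "affine_in_q n u" "affine_in_q n v"
  shows "moyal n u v = poisson n u v"
proof
  fix x
  have "moyal n u v x = (\<Sum>l\<in>{0}. (-1/4 :: complex) ^ l / fact (2*l+1) * Pl n (2*l+1) u v x)"
    unfolding moyal_def
    by (rule suminf_finite) (auto simp: Pl_eq_0_if_affine_in_q[OF assms])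
  then show "moyal n u v x = poisson n u v x"
    using Pl_1_eq_poisson[of n u v x] by simp
qed

lemma pd_tilde_fun:
  "pd j (tilde_fun n X) x =
    (\<Sum>a\<le>n. \<Sum>b\<le>n. (pd j (Pvec a) x * Qvec n b x + Pvec a x * pd j (Qvec n b) x) * X $$ (b, a))"
proof -
  have entries: "polyfun UNIV (\<lambda>x. psi n a b x * X $$ (b, a))" for a b
    by (intro polyfun.mult polyfun_psi polyfun.const)
  have rows: "polyfun UNIV (\<lambda>x. \<Sum>b\<le>n. psi n a b x * X $$ (b, a))" for a
    by (intro polyfun_sum entries) auto
  have psi_eq: "psi n a b = (\<lambda>x. Pvec a x * Qvec n b x)" for a b
    by (simp add: psi_def[abs_def])
  show ?thesis
    unfolding tilde_fun_def[abs_def]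
    by (simp add: pd_sum[OF _ rows] pd_sum[OF _ entries] pd_mult[OF polyfun_psi polyfun.const])
      (simp add: psi_eq pd_mult[OF polyfun_mono[OF polyfun_Pvec subset_UNIV] polyfun_Qvec])
qed

lemma affine_in_q_tilde_fun: "affine_in_q n (tilde_fun n X)"
proof
  show "polyfun UNIV (tilde_fun n X)" by (rule polyfun_tilde_fun)
next
  fix j assume "n \<le> j" "j < 2 * n"
  then obtain k where k: "j = n + k" "k < n" by (metis add_less_cancel_left le_Suc_ex mult_2)
  have "pd j (tilde_fun n X) x =
      (\<Sum>a\<le>n. \<Sum>b\<le>n. Pvec a x * (if b = 0 then - x k else if b = Suc k then 1 else 0) * X $$ (b, a))" for x
    unfolding pd_tilde_fun k(1) using k(2) by (intro sum.cong refl) (simp add: pd_Pvec pd_Qvec_q)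
  moreover have "Pvec a (x(i := t)) = Pvec a x" if "a \<le> n" "n \<le> i" for a i x t
    using that by (auto simp: Pvec_def)
  ultimately show "q_free n (pd j (tilde_fun n X))"
    using k by (auto simp: q_free_def indep_var_def intro!: sum.cong)
qed

lemma moyal_tilde:
  "moyal n (peval (tilde n X)) (peval (tilde n Y)) = poisson n (peval (tilde n X)) (peval (tilde n Y))"
  unfolding peval_tilde by (intro moyal_eq_poisson_if_affine_in_q affine_in_q_tilde_fun)

section \<open>The Weyl quantization of the entries of \<open>\<Psi>\<close>\<close>

abbreviation var_monom :: "nat \<Rightarrow> (nat \<Rightarrow>\<^sub>0 nat)" where
  "var_monom i \<equiv> Poly_Mapping.single i (1::nat)"

definition weyl_monom :: "nat \<Rightarrow> (nat \<Rightarrow>\<^sub>0 nat) \<Rightarrow> cfun \<Rightarrow> cfun" where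
  "weyl_monom n m \<phi> p = \<i> ^ length (qalpha n m) *
      pdl (qalpha n m) (\<lambda>s. (\<Prod>k<n. (p k + s k / 2) ^ Poly_Mapping.lookup m k) * \<phi> (\<lambda>k. p k + s k)) (\<lambda>_. 0)"

lemma Weyl_eq_lin_ext: "Weyl n f \<phi> p = lin_ext (\<lambda>m. weyl_monom n m \<phi> p) f"
  by (simp add: Weyl_def lin_ext_def weyl_monom_def mult.assoc)

lemma qalpha_eq_single:
  assumes "\<And>c. c < n \<Longrightarrow> Poly_Mapping.lookup m (n + c) = (if c = k then 1 else 0)" "k < n"
  shows "qalpha n m = [k]"
proof -
  have exponents: "map (\<lambda>c. replicate (Poly_Mapping.lookup m (n + c)) c) [0..<n]
      = map (\<lambda>c. if c = k then [c] else []) [0..<n]"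
    using assms(1) by (intro map_cong refl) auto
  have "concat (map (\<lambda>c. if c = k then [c] else []) [0..<N]) = (if k < N then [k] else [])" for N
    by (induction N) auto
  with assms(2) show ?thesis
    unfolding qalpha_def exponents by simp
qed

lemma polyfun_has_derivative_shift:
  assumes "polyfun V \<phi>"
  shows "((\<lambda>t. \<phi> (p(k := p k + t))) has_field_derivative pd k \<phi> p) (at 0)"
proof -
  have "((\<lambda>u. \<phi> (p(k := u))) has_field_derivative pd k \<phi> p) (at (p k + 0))"
    using polyfun_has_pd[OF assms, of p k] by simp
  moreover have "((\<lambda>t. p k + t) has_field_derivative 1) (at 0)"
    by (auto intro!: derivative_eq_intros)
  ultimately show ?thesis
    using DERIV_chain2 by fastforce
qed

text \<open>All monomials of \<open>\<Psi>\<close> have degree one in \<open>q\<close>, and their \<open>p\<close>-part, after the shift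
  \<open>p \<mapsto> p + s/2\<close>, is a product of at most two affine functions of the one shift variable \<open>s\<^sub>k\<close>.\<close>

lemma weyl_monom_linear_in_q:
  assumes \<phi>: "polyfun V \<phi>" and q: "qalpha n m = [k]" and "k < n"
    and p_part: "\<And>t. (\<Prod>c<n. (p c + ((\<lambda>_. 0)(k := t)) c / 2) ^ Poly_Mapping.lookup m c)
       = (c1 + d1 * t) * (c2 + d2 * t)"
  shows "weyl_monom n m \<phi> p = \<i> * ((d1 * c2 + c1 * d2) * \<phi> p + c1 * c2 * pd k \<phi> p)"
proof -
  have shift: "(\<lambda>c. p c + ((\<lambda>_. 0)(k := t)) c) = p(k := p k + t)" for t
    by (rule ext) simp
  have "((\<lambda>t. (c1 + d1 * t) * (c2 + d2 * t) * \<phi> (p(k := p k + t))) has_field_derivative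
      (d1 * c2 + c1 * d2) * \<phi> p + c1 * c2 * pd k \<phi> p) (at 0)"
    by (rule derivative_eq_intros polyfun_has_derivative_shift[OF \<phi>] refl)+ (simp add: algebra_simps)
  then have "pd k (\<lambda>s. (\<Prod>c<n. (p c + s c / 2) ^ Poly_Mapping.lookup m c) * \<phi> (\<lambda>c. p c + s c)) (\<lambda>_. 0)
      = (d1 * c2 + c1 * d2) * \<phi> p + c1 * c2 * pd k \<phi> p"
    unfolding pd_def p_part shift by (simp add: DERIV_imp_deriv)
  then show ?thesis
    unfolding weyl_monom_def q by simp
qed

lemma prod_power_delta:
  fixes g :: "nat \<Rightarrow> complex"
  assumes "finite A" "a \<in> A"
  shows "(\<Prod>c\<in>A. g c ^ (if a = c then 1 else 0)) = g a"
  using assms by (simp add: if_distrib[of "power _"] prod.delta cong: if_cong)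

lemma weyl_monom_q:
  assumes \<phi>: "polyfun V \<phi>" and "b < n"
  shows "weyl_monom n (var_monom (n + b)) \<phi> p = \<i> * pd b \<phi> p"
proof -
  have q: "qalpha n (var_monom (n + b)) = [b]"
    by (rule qalpha_eq_single) (use \<open>b < n\<close> in \<open>auto simp: lookup_single when_def\<close>)
  have "(\<Prod>c<n. (p c + ((\<lambda>_. 0)(b := t)) c / 2) ^ Poly_Mapping.lookup (var_monom (n + b)) c)
      = (1 + 0 * t) * (1 + 0 * t)" for t
    by (simp add: lookup_single when_def)
  from weyl_monom_linear_in_q[OF \<phi> q \<open>b < n\<close> this] show ?thesis by simp
qed

lemma weyl_monom_pq:
  assumes \<phi>: "polyfun V \<phi>" and "a < n" "b < n"
  shows "weyl_monom n (var_monom a + var_monom (n + b)) \<phi> p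
    = \<i> * ((if a = b then 1/2 else 0) * \<phi> p + p a * pd b \<phi> p)"
proof -
  have q: "qalpha n (var_monom a + var_monom (n + b)) = [b]"
    by (rule qalpha_eq_single) (use assms in \<open>auto simp: lookup_single when_def lookup_add\<close>)
  have p_part: "(\<Prod>c<n. (p c + ((\<lambda>_. 0)(b := t)) c / 2) ^ Poly_Mapping.lookup (var_monom a + var_monom (n + b)) c)
      = (p a + (if a = b then 1/2 else 0) * t) * (1 + 0 * t)" for t
  proof -
    have "(\<Prod>c<n. (p c + ((\<lambda>_. 0)(b := t)) c / 2) ^ Poly_Mapping.lookup (var_monom a + var_monom (n + b)) c)
        = (\<Prod>c<n. (p c + ((\<lambda>_. 0)(b := t)) c / 2) ^ (if a = c then 1 else 0))"
      by (intro prod.cong refl) (auto simp: lookup_single when_def lookup_add)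
    with \<open>a < n\<close> show ?thesis by (simp add: prod_power_delta)
  qed
  from weyl_monom_linear_in_q[OF \<phi> q \<open>b < n\<close> p_part] show ?thesis by simp
qed

lemma weyl_monom_ppq:
  assumes \<phi>: "polyfun V \<phi>" and "a < n" "b < n"
  shows "weyl_monom n (var_monom a + var_monom b + var_monom (n + b)) \<phi> p
    = \<i> * (((if a = b then p b / 2 else 0) + p a / 2) * \<phi> p + p a * p b * pd b \<phi> p)"
proof -
  have q: "qalpha n (var_monom a + var_monom b + var_monom (n + b)) = [b]"
    by (rule qalpha_eq_single) (use assms in \<open>auto simp: lookup_single when_def lookup_add\<close>)
  have p_part: "(\<Prod>c<n. (p c + ((\<lambda>_. 0)(b := t)) c / 2) ^ Poly_Mapping.lookup (var_monom a + var_monom b + var_monom (n + b)) c)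
      = (p a + (if a = b then 1/2 else 0) * t) * (p b + 1/2 * t)" for t
  proof -
    have "(\<Prod>c<n. (p c + ((\<lambda>_. 0)(b := t)) c / 2) ^ Poly_Mapping.lookup (var_monom a + var_monom b + var_monom (n + b)) c)
        = (\<Prod>c<n. (p c + ((\<lambda>_. 0)(b := t)) c / 2) ^ ((if a = c then 1 else 0) + (if b = c then 1 else 0)))"
      by (intro prod.cong refl) (auto simp: lookup_single when_def lookup_add)
    with assms show ?thesis by (simp add: power_add prod.distrib prod_power_delta)
  qed
  from weyl_monom_linear_in_q[OF \<phi> q \<open>b < n\<close> p_part] show ?thesis by (simp add: algebra_simps)
qed

text \<open>\<open>rho_unit n a b\<close> is \<open>\<rho>\<^sub>0(E\<^sub>b\<^sub>a)\<close> for the matrix unit \<open>E\<^sub>b\<^sub>a\<close>.\<close>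

definition diff_op :: "nat \<Rightarrow> nat \<Rightarrow> cfun \<Rightarrow> cfun" where
  "diff_op n b \<phi> p =
    (if b = 0 then - ((\<Sum>j<n. p j * pd j \<phi> p) + (of_nat n + 1) / 2 * \<phi> p) else pd (b - 1) \<phi> p)"

definition rho_unit :: "nat \<Rightarrow> nat \<Rightarrow> nat \<Rightarrow> cfun \<Rightarrow> cfun" where
  "rho_unit n a b \<phi> p = - (Pvec a p * diff_op n b \<phi> p + (if a = b then 1/2 else 0) * \<phi> p)"

lemma pvar_mult: "pvar i * pvar j = Poly_Mapping.single (var_monom i + var_monom j) 1"
  by (simp add: pvar_def mult_single)

lemma psum_eq_sum_single: "psum n = (\<Sum>j<n. Poly_Mapping.single (var_monom j + var_monom (n + j)) 1)"
  by (simp add: psum_def pvar_mult)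

lemma Weyl_Psi_corner:
  assumes \<phi>: "polyfun V \<phi>"
  shows "\<i> * Weyl n (Psi n 0 0) \<phi> p = rho_unit n 0 0 \<phi> p"
proof -
  have Psi: "Psi n 0 0 = - (\<Sum>j<n. Poly_Mapping.single (var_monom j + var_monom (n + j)) 1)"
    by (simp add: Psi_def psum_eq_sum_single)
  have "\<i> * Weyl n (Psi n 0 0) \<phi> p = \<i> * - (\<Sum>j<n. weyl_monom n (var_monom j + var_monom (n + j)) \<phi> p)"
    unfolding Psi by (simp only: Weyl_eq_lin_ext lin_ext_uminus lin_ext_sum lin_ext_single mult_1)
  also have "\<dots> = \<i> * - (\<Sum>j<n. \<i> * (1/2 * \<phi> p + p j * pd j \<phi> p))"
    using weyl_monom_pq[OF \<phi>] by (intro arg_cong[where f = "\<lambda>s. \<i> * - s"] sum.cong) auto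
  also have "\<dots> = rho_unit n 0 0 \<phi> p"
    by (simp add: sum_distrib_left[symmetric] sum.distrib rho_unit_def diff_op_def Pvec_def algebra_simps
        add_divide_distrib)
  finally show ?thesis .
qed

lemma Weyl_Psi_first_row:
  assumes \<phi>: "polyfun V \<phi>" and "0 < b" "b \<le> n"
  shows "\<i> * Weyl n (Psi n 0 b) \<phi> p = rho_unit n 0 b \<phi> p"
proof -
  have Psi: "Psi n 0 b = Poly_Mapping.single (var_monom (n + (b - 1))) 1"
    using assms by (simp add: Psi_def pvar_def)
  have "b - 1 < n" using assms by simp
  have "\<i> * Weyl n (Psi n 0 b) \<phi> p = \<i> * weyl_monom n (var_monom (n + (b - 1))) \<phi> p"
    unfolding Psi by (simp only: Weyl_eq_lin_ext lin_ext_single mult_1)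
  also have "\<dots> = \<i> * (\<i> * pd (b - 1) \<phi> p)"
    by (simp only: weyl_monom_q[OF \<phi> \<open>b - 1 < n\<close>])
  also have "\<dots> = rho_unit n 0 b \<phi> p"
    using assms by (simp add: rho_unit_def diff_op_def Pvec_def)
  finally show ?thesis .
qed

lemma Weyl_Psi_first_column:
  assumes \<phi>: "polyfun V \<phi>" and "0 < a" "a \<le> n"
  shows "\<i> * Weyl n (Psi n a 0) \<phi> p = rho_unit n a 0 \<phi> p"
proof -
  let ?i = "a - 1"
  have "?i < n" using assms by simp
  have Psi: "Psi n a 0 = - (\<Sum>j<n. Poly_Mapping.single (var_monom ?i + var_monom j + var_monom (n + j)) 1)"
    using assms by (simp add: Psi_def psum_eq_sum_single sum_distrib_left pvar_def mult_single add.assoc)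
  have "\<i> * Weyl n (Psi n a 0) \<phi> p
      = \<i> * - (\<Sum>j<n. weyl_monom n (var_monom ?i + var_monom j + var_monom (n + j)) \<phi> p)"
    unfolding Psi by (simp only: Weyl_eq_lin_ext lin_ext_uminus lin_ext_sum lin_ext_single mult_1)
  also have "\<dots> = \<i> * - (\<Sum>j<n. \<i> * (((if ?i = j then p j / 2 else 0) + p ?i / 2) * \<phi> p + p ?i * p j * pd j \<phi> p))"
    using weyl_monom_ppq[OF \<phi> \<open>?i < n\<close>] by (intro arg_cong[where f = "\<lambda>s. \<i> * - s"] sum.cong) auto
  also have "\<dots> = (\<Sum>j<n. ((if ?i = j then p j / 2 else 0) + p ?i / 2) * \<phi> p + p ?i * p j * pd j \<phi> p)"
    by (simp add: sum_distrib_left[symmetric])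
  also have "\<dots> = (p ?i / 2 + of_nat n * (p ?i / 2)) * \<phi> p + p ?i * (\<Sum>j<n. p j * pd j \<phi> p)"
    using \<open>?i < n\<close> by (simp add: sum.distrib distrib_right sum_distrib_left sum_distrib_right[symmetric]
        sum.delta mult.assoc)
  also have "\<dots> = rho_unit n a 0 \<phi> p"
    using assms by (simp add: rho_unit_def diff_op_def Pvec_def algebra_simps add_divide_distrib)
  finally show ?thesis .
qed

lemma Weyl_Psi_interior:
  assumes \<phi>: "polyfun V \<phi>" and "0 < a" "a \<le> n" "0 < b" "b \<le> n"
  shows "\<i> * Weyl n (Psi n a b) \<phi> p = rho_unit n a b \<phi> p"
proof -
  have Psi: "Psi n a b = Poly_Mapping.single (var_monom (a - 1) + var_monom (n + (b - 1))) 1"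
    using assms by (simp add: Psi_def pvar_def mult_single)
  have "a - 1 < n" "b - 1 < n" "a - 1 = b - 1 \<longleftrightarrow> a = b" using assms by arith+
  have "\<i> * Weyl n (Psi n a b) \<phi> p = \<i> * weyl_monom n (var_monom (a - 1) + var_monom (n + (b - 1))) \<phi> p"
    unfolding Psi by (simp only: Weyl_eq_lin_ext lin_ext_single mult_1)
  also have "\<dots> = \<i> * (\<i> * ((if a - 1 = b - 1 then 1/2 else 0) * \<phi> p + p (a - 1) * pd (b - 1) \<phi> p))"
    by (simp only: weyl_monom_pq[OF \<phi> \<open>a - 1 < n\<close> \<open>b - 1 < n\<close>])
  also have "\<dots> = rho_unit n a b \<phi> p"
    using assms \<open>a - 1 = b - 1 \<longleftrightarrow> a = b\<close> by (simp add: rho_unit_def diff_op_def Pvec_def algebra_simps)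
  finally show ?thesis .
qed

lemma Weyl_Psi:
  assumes "polyfun V \<phi>" "a \<le> n" "b \<le> n"
  shows "\<i> * Weyl n (Psi n a b) \<phi> p = rho_unit n a b \<phi> p"
  using assms Weyl_Psi_corner Weyl_Psi_first_row Weyl_Psi_first_column Weyl_Psi_interior
  by (cases "a = 0"; cases "b = 0") auto

lemma rho0_eq_sum_rho_unit:
  assumes "polyfun V \<phi>"
  shows "rho0 n X \<phi> p = (\<Sum>a\<le>n. \<Sum>b\<le>n. X $$ (b, a) * rho_unit n a b \<phi> p)"
proof -
  have "rho0 n X \<phi> p = (\<Sum>a\<le>n. \<Sum>b\<le>n. X $$ (b, a) * (\<i> * Weyl n (Psi n a b) \<phi> p))"
    unfolding rho0_def tilde_def Weyl_eq_lin_ext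
    by (simp add: sum_distrib_left lin_ext_sum lin_ext_pconst_mult lin_ext_mult_pconst mult_ac)
  also have "\<dots> = (\<Sum>a\<le>n. \<Sum>b\<le>n. X $$ (b, a) * rho_unit n a b \<phi> p)"
    by (intro sum.cong refl) (simp add: Weyl_Psi[OF assms])
  finally show ?thesis .
qed

section \<open>The operators \<open>\<rho>\<^sub>0(E\<^sub>b\<^sub>a)\<close> satisfy the relations of \<open>gl(n+1)\<close>\<close>

lemma diff_op_0: "diff_op n 0 \<phi> = (\<lambda>p. - ((\<Sum>j<n. p j * pd j \<phi> p) + (of_nat n + 1) / 2 * \<phi> p))"
  by (simp add: fun_eq_iff diff_op_def)

lemma diff_op_pos: "b \<noteq> 0 \<Longrightarrow> diff_op n b \<phi> = pd (b - 1) \<phi>"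
  by (simp add: fun_eq_iff diff_op_def)

lemma polyfun_diff_op:
  assumes "polyfun {..<n} \<phi>"
  shows "polyfun {..<n} (diff_op n b \<phi>)"
proof (cases "b = 0")
  case True
  show ?thesis unfolding True diff_op_0
    by (intro polyfun_uminus polyfun.add polyfun_sum polyfun.mult polyfun.var polyfun_pd assms polyfun.const)
      auto
next
  case False
  show ?thesis unfolding diff_op_pos[OF False] by (rule polyfun_pd[OF assms])
qed

lemma polyfun_rho_unit: "polyfun {..<n} \<phi> \<Longrightarrow> a \<le> n \<Longrightarrow> polyfun {..<n} (rho_unit n a b \<phi>)"
  unfolding rho_unit_def[abs_def]
  by (intro polyfun_uminus polyfun.add polyfun.mult polyfun_Pvec polyfun_diff_op polyfun.const)

lemma diff_op_add:
  "polyfun V f \<Longrightarrow> polyfun V g \<Longrightarrow> diff_op n b (\<lambda>x. f x + g x) p = diff_op n b f p + diff_op n b g p"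
  by (simp add: diff_op_def pd_add[of V] sum.distrib field_simps)

lemma diff_op_cmult: "polyfun V f \<Longrightarrow> diff_op n b (\<lambda>x. c * f x) p = c * diff_op n b f p"
  by (simp add: diff_op_def pd_cmult[of V] sum_distrib_left algebra_simps)

lemma diff_op_uminus: "polyfun V f \<Longrightarrow> diff_op n b (\<lambda>x. - f x) p = - diff_op n b f p"
  using diff_op_cmult[of V f n b "-1" p] by simp

lemma diff_op_Pvec_mult:
  assumes \<psi>: "polyfun V \<psi>" and "c \<le> n"
  shows "diff_op n b (\<lambda>x. Pvec c x * \<psi> x) p =
    ((if b = c then 1 else 0) - (if b = 0 then Pvec c p else 0)) * \<psi> p + Pvec c p * diff_op n b \<psi> p"
proof -
  note pd_Pvec_mult = pd_mult[OF polyfun_mono[OF polyfun_Pvec[OF \<open>c \<le> n\<close>] subset_UNIV]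
      polyfun_mono[OF \<psi> subset_UNIV]]
  show ?thesis
  proof (cases "b = 0")
    case True
    have "(\<Sum>j<n. p j * pd j (\<lambda>x. Pvec c x * \<psi> x) p)
        = (\<Sum>j<n. (if c = Suc j then p j * \<psi> p else 0) + Pvec c p * (p j * pd j \<psi> p))"
      by (intro sum.cong refl) (simp add: pd_Pvec_mult pd_Pvec distrib_left mult.left_commute)
    also have "\<dots> = (if 0 < c then p (c - 1) * \<psi> p else 0) + Pvec c p * (\<Sum>j<n. p j * pd j \<psi> p)"
      using \<open>c \<le> n\<close> by (simp add: sum.distrib sum_distrib_left sum_if_Suc_eq)
    finally have "(\<Sum>j<n. p j * pd j (\<lambda>x. Pvec c x * \<psi> x) p)
        = (if 0 < c then p (c - 1) * \<psi> p else 0) + Pvec c p * (\<Sum>j<n. p j * pd j \<psi> p)" .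
    with True \<open>c \<le> n\<close> show ?thesis
      by (auto simp: diff_op_def Pvec_def algebra_simps)
  next
    case False
    then show ?thesis
      by (auto simp: diff_op_def pd_Pvec_mult pd_Pvec)
  qed
qed

lemma euler_pd_commutator:
  assumes \<phi>: "polyfun V \<phi>" and "k < n"
  shows "diff_op n 0 (pd k \<phi>) p - pd k (diff_op n 0 \<phi>) p = pd k \<phi> p"
proof -
  note \<phi>U = polyfun_mono[OF \<phi> subset_UNIV]
  have terms: "polyfun UNIV (\<lambda>p. p j * pd j \<phi> p)" for j
    by (intro polyfun.mult polyfun.var polyfun_pd \<phi>U) auto
  have euler: "polyfun UNIV (\<lambda>p. \<Sum>j<n. p j * pd j \<phi> p)"
    by (intro polyfun_sum terms) auto
  have shift: "polyfun UNIV (\<lambda>p. (of_nat n + 1) / 2 * \<phi> p)"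
    by (intro polyfun.mult polyfun.const \<phi>U)
  have "pd k (diff_op n 0 \<phi>) p
      = - ((\<Sum>j<n. (if k = j then 1 else 0) * pd j \<phi> p + p j * pd k (pd j \<phi>) p) + (of_nat n + 1) / 2 * pd k \<phi> p)"
    unfolding diff_op_0
    by (simp only: pd_uminus[OF polyfun.add[OF euler shift]] pd_add[OF euler shift]
        pd_sum[OF finite_lessThan terms] pd_cmult[OF \<phi>U] pd_mult[OF polyfun.var polyfun_pd[OF \<phi>U]]
        pd_var UNIV_I)
  also have "\<dots> = - (pd k \<phi> p + (\<Sum>j<n. p j * pd j (pd k \<phi>) p) + (of_nat n + 1) / 2 * pd k \<phi> p)"
    using \<open>k < n\<close> by (simp add: if_one_zero_mult sum.distrib sum.delta pd_commute[OF \<phi>U])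
  finally show ?thesis
    by (simp add: diff_op_0)
qed

lemma diff_op_commutator:
  assumes \<phi>: "polyfun V \<phi>" and "b \<le> n" "d \<le> n"
  shows "diff_op n b (diff_op n d \<phi>) p - diff_op n d (diff_op n b \<phi>) p =
    (if b = 0 then diff_op n d \<phi> p else 0) - (if d = 0 then diff_op n b \<phi> p else 0)"
proof (cases "b = 0"; cases "d = 0")
  assume "b = 0" "d \<noteq> 0"
  with assms euler_pd_commutator[OF \<phi>, of "d - 1" n p] show ?thesis
    by (simp add: diff_op_pos)
next
  assume "b \<noteq> 0" "d = 0"
  moreover from assms \<open>b \<noteq> 0\<close> have "b - 1 < n" by simp
  ultimately show ?thesis
    using arg_cong[where f = uminus, OF euler_pd_commutator[OF \<phi> \<open>b - 1 < n\<close>, of p]]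
    by (simp add: diff_op_pos)
next
  assume "b \<noteq> 0" "d \<noteq> 0"
  then show ?thesis
    by (simp add: diff_op_pos pd_commute[OF \<phi>])
qed simp

lemma rho_unit_rho_unit:
  assumes \<phi>: "polyfun {..<n} \<phi>" and "c \<le> n"
  shows "rho_unit n a b (rho_unit n c d \<phi>) p =
    Pvec a p * (((if b = c then 1 else 0) - (if b = 0 then Pvec c p else 0)) * diff_op n d \<phi> p
       + Pvec c p * diff_op n b (diff_op n d \<phi>) p + (if c = d then 1/2 else 0) * diff_op n b \<phi> p)
    + (if a = b then 1/2 else 0) * (Pvec c p * diff_op n d \<phi> p + (if c = d then 1/2 else 0) * \<phi> p)"
proof -
  have first: "polyfun {..<n} (\<lambda>x. Pvec c x * diff_op n d \<phi> x)"
    by (intro polyfun.mult polyfun_Pvec \<open>c \<le> n\<close> polyfun_diff_op \<phi>)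
  have second: "polyfun {..<n} (\<lambda>x. (if c = d then 1/2 else 0) * \<phi> x)"
    by (intro polyfun.mult polyfun.const \<phi>)
  have unfold: "rho_unit n c d \<phi> = (\<lambda>x. - (Pvec c x * diff_op n d \<phi> x + (if c = d then 1/2 else 0) * \<phi> x))"
    by (simp add: fun_eq_iff rho_unit_def)
  have "diff_op n b (rho_unit n c d \<phi>) p
      = - (diff_op n b (\<lambda>x. Pvec c x * diff_op n d \<phi> x) p + (if c = d then 1/2 else 0) * diff_op n b \<phi> p)"
    unfolding unfold
    by (simp only: diff_op_uminus[OF polyfun.add[OF first second]] diff_op_add[OF first second]
        diff_op_cmult[OF \<phi>])
  also have "\<dots> = - (((if b = c then 1 else 0) - (if b = 0 then Pvec c p else 0)) * diff_op n d \<phi> p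
      + Pvec c p * diff_op n b (diff_op n d \<phi>) p + (if c = d then 1/2 else 0) * diff_op n b \<phi> p)"
    by (simp only: diff_op_Pvec_mult[OF polyfun_diff_op[OF \<phi>] \<open>c \<le> n\<close>])
  finally have D: "diff_op n b (rho_unit n c d \<phi>) p = \<dots>" .
  show ?thesis
    by (simp only: rho_unit_def[of n a b "rho_unit n c d \<phi>" p] D) (simp add: rho_unit_def algebra_simps)
qed

lemma rho_unit_commutator:
  assumes \<phi>: "polyfun {..<n} \<phi>" and "a \<le> n" "b \<le> n" "c \<le> n" "d \<le> n"
  shows "rho_unit n a b (rho_unit n c d \<phi>) p - rho_unit n c d (rho_unit n a b \<phi>) p =
     (if a = d then rho_unit n c b \<phi> p else 0) - (if b = c then rho_unit n a d \<phi> p else 0)"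
proof -
  have swap: "diff_op n b (diff_op n d \<phi>) p = diff_op n d (diff_op n b \<phi>) p
      + (if b = 0 then diff_op n d \<phi> p else 0) - (if d = 0 then diff_op n b \<phi> p else 0)"
    using diff_op_commutator[OF \<phi> \<open>b \<le> n\<close> \<open>d \<le> n\<close>, of p] by (simp add: algebra_simps)
  show ?thesis
    unfolding rho_unit_rho_unit[OF \<phi> \<open>c \<le> n\<close>] rho_unit_rho_unit[OF \<phi> \<open>a \<le> n\<close>] swap
    by (cases "a = d"; cases "b = c"; cases "b = 0"; cases "d = 0"; simp add: rho_unit_def algebra_simps)
qed

lemma rho_unit_add:
  "polyfun {..<n} f \<Longrightarrow> polyfun {..<n} g \<Longrightarrow>
    rho_unit n a b (\<lambda>x. f x + g x) p = rho_unit n a b f p + rho_unit n a b g p"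
  by (simp add: rho_unit_def diff_op_add[of "{..<n}"] algebra_simps)

lemma rho_unit_cmult: "polyfun {..<n} f \<Longrightarrow> rho_unit n a b (\<lambda>x. c * f x) p = c * rho_unit n a b f p"
  by (simp add: rho_unit_def diff_op_cmult[of "{..<n}"] algebra_simps)

lemma rho_unit_sum:
  "finite I \<Longrightarrow> (\<And>i. i \<in> I \<Longrightarrow> polyfun {..<n} (g i)) \<Longrightarrow>
    rho_unit n a b (\<lambda>x. \<Sum>i\<in>I. g i x) p = (\<Sum>i\<in>I. rho_unit n a b (g i) p)"
proof (induction I rule: finite_induct)
  case empty
  then show ?case by (simp add: rho_unit_def diff_op_def)
next
  case (insert i I)
  then have "rho_unit n a b (\<lambda>x. g i x + (\<Sum>i\<in>I. g i x)) p = rho_unit n a b (g i) p + rho_unit n a b (\<lambda>x. \<Sum>i\<in>I. g i x) p"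
    by (intro rho_unit_add polyfun_sum) auto
  with insert show ?case by simp
qed

lemma rho0_eq_sum: "polyfun {..<n} \<phi> \<Longrightarrow> rho0 n X \<phi> = (\<lambda>p. \<Sum>a\<le>n. \<Sum>b\<le>n. X $$ (b, a) * rho_unit n a b \<phi> p)"
  by (simp add: fun_eq_iff rho0_eq_sum_rho_unit)

lemma polyfun_rho0: "polyfun {..<n} \<phi> \<Longrightarrow> polyfun {..<n} (rho0 n X \<phi>)"
  by (simp only: rho0_eq_sum) (intro polyfun_sum polyfun.mult polyfun.const polyfun_rho_unit; simp)

lemma rho0_Pspace: "\<phi> \<in> Pspace n \<Longrightarrow> rho0 n X \<phi> \<in> Pspace n"
  by (simp add: Pspace_iff_polyfun polyfun_rho0)

lemma rho0_linear:
  assumes "X \<in> carrier_mat (n+1) (n+1)" "Y \<in> carrier_mat (n+1) (n+1)" "\<phi> \<in> Pspace n"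
  shows "rho0 n (a \<cdot>\<^sub>m X + b \<cdot>\<^sub>m Y) \<phi> = (\<lambda>p. a * rho0 n X \<phi> p + b * rho0 n Y \<phi> p)"
proof -
  have "polyfun {..<n} \<phi>" using assms(3) by (simp add: Pspace_iff_polyfun)
  with assms(1,2) show ?thesis
    by (simp add: rho0_eq_sum fun_eq_iff algebra_simps sum.distrib sum_distrib_left)
qed

lemma sum_swap_pairs:
  "(\<Sum>c\<in>C. \<Sum>d\<in>D. \<Sum>a\<in>A. \<Sum>b\<in>B. f a b c d) = (\<Sum>a\<in>A. \<Sum>b\<in>B. \<Sum>c\<in>C. \<Sum>d\<in>D. f a b c d)"
proof -
  have "(\<Sum>c\<in>C. \<Sum>d\<in>D. \<Sum>a\<in>A. \<Sum>b\<in>B. f a b c d) = (\<Sum>c\<in>C. \<Sum>a\<in>A. \<Sum>b\<in>B. \<Sum>d\<in>D. f a b c d)"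
    by (intro sum.cong refl) (simp add: sum.swap[of _ D] sum.swap[of _ D B])
  also have "\<dots> = (\<Sum>a\<in>A. \<Sum>b\<in>B. \<Sum>c\<in>C. \<Sum>d\<in>D. f a b c d)"
    by (simp add: sum.swap[of _ C] sum.swap[of _ C B])
  finally show ?thesis .
qed

lemma rho0_rho0:
  assumes \<phi>: "polyfun {..<n} \<phi>"
  shows "rho0 n X (rho0 n Y \<phi>) p =
    (\<Sum>a\<le>n. \<Sum>b\<le>n. \<Sum>c\<le>n. \<Sum>d\<le>n. X $$ (b, a) * (Y $$ (d, c) * rho_unit n a b (rho_unit n c d \<phi>) p))"
proof -
  have entries: "polyfun {..<n} (\<lambda>x. Y $$ (d, c) * rho_unit n c d \<phi> x)" if "c \<le> n" for c d
    using that by (intro polyfun.mult polyfun.const polyfun_rho_unit \<phi>)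
  have rows: "polyfun {..<n} (\<lambda>x. \<Sum>d\<le>n. Y $$ (d, c) * rho_unit n c d \<phi> x)" if "c \<le> n" for c
    using that by (intro polyfun_sum entries) auto
  have inner: "rho_unit n a b (\<lambda>x. \<Sum>c\<le>n. \<Sum>d\<le>n. Y $$ (d, c) * rho_unit n c d \<phi> x) p
      = (\<Sum>c\<le>n. \<Sum>d\<le>n. Y $$ (d, c) * rho_unit n a b (rho_unit n c d \<phi>) p)" for a b
  proof -
    have "rho_unit n a b (\<lambda>x. \<Sum>c\<le>n. \<Sum>d\<le>n. Y $$ (d, c) * rho_unit n c d \<phi> x) p
        = (\<Sum>c\<le>n. \<Sum>d\<le>n. rho_unit n a b (\<lambda>x. Y $$ (d, c) * rho_unit n c d \<phi> x) p)"
      by (subst rho_unit_sum) (auto intro!: sum.cong rho_unit_sum rows entries)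
    also have "\<dots> = (\<Sum>c\<le>n. \<Sum>d\<le>n. Y $$ (d, c) * rho_unit n a b (rho_unit n c d \<phi>) p)"
      by (intro sum.cong refl rho_unit_cmult polyfun_rho_unit \<phi>) auto
    finally show ?thesis .
  qed
  have "rho0 n X (rho0 n Y \<phi>) p = (\<Sum>a\<le>n. \<Sum>b\<le>n. X $$ (b, a) * rho_unit n a b (rho0 n Y \<phi>) p)"
    by (rule rho0_eq_sum_rho_unit[OF polyfun_rho0[OF \<phi>]])
  then show ?thesis
    by (simp only: rho0_eq_sum[OF \<phi>] inner sum_distrib_left)
qed

lemma rho0_commutator:
  assumes X: "X \<in> carrier_mat (n+1) (n+1)" and Y: "Y \<in> carrier_mat (n+1) (n+1)" and "\<phi> \<in> Pspace n"
  shows "rho0 n (X * Y - Y * X) \<phi> = (\<lambda>p. rho0 n X (rho0 n Y \<phi>) p - rho0 n Y (rho0 n X \<phi>) p)"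
proof
  fix p
  have \<phi>: "polyfun {..<n} \<phi>" using \<open>\<phi> \<in> Pspace n\<close> by (simp add: Pspace_iff_polyfun)
  have "rho0 n X (rho0 n Y \<phi>) p - rho0 n Y (rho0 n X \<phi>) p =
    (\<Sum>a\<le>n. \<Sum>b\<le>n. \<Sum>c\<le>n. \<Sum>d\<le>n. X $$ (b, a) * (Y $$ (d, c) *
      (rho_unit n a b (rho_unit n c d \<phi>) p - rho_unit n c d (rho_unit n a b \<phi>) p)))"
    using sum_swap_pairs[of "\<lambda>a b c d. X $$ (b, a) * (Y $$ (d, c) * rho_unit n c d (rho_unit n a b \<phi>) p)"]
    by (simp add: rho0_rho0[OF \<phi>] mult_ac sum_subtractf[symmetric] right_diff_distrib)
  also have "\<dots> = (\<Sum>a\<le>n. \<Sum>b\<le>n. (\<Sum>c\<le>n. \<Sum>d\<le>n. ((if a = d then rho_unit n c b \<phi> p else 0)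
      - (if b = c then rho_unit n a d \<phi> p else 0)) * Y $$ (d, c)) * X $$ (b, a))"
    by (simp add: rho_unit_commutator[OF \<phi>] sum_distrib_left sum_distrib_right mult_ac)
  also have "\<dots> = rho0 n (X * Y - Y * X) \<phi> p"
    unfolding gl_bracket_sum[OF X Y] by (simp add: rho0_eq_sum_rho_unit[OF \<phi>] mult.commute)
  finally show "rho0 n (X * Y - Y * X) \<phi> p = rho0 n X (rho0 n Y \<phi>) p - rho0 n Y (rho0 n X \<phi>) p"
    by simp
qed

theorem proposition6p1:
  fixes n :: nat
  assumes "n \<ge> 1"
  shows "(\<forall>X\<in>sl n. \<forall>Y\<in>sl n.
            moyal n (peval (tilde n X)) (peval (tilde n Y)) = poisson n (peval (tilde n X)) (peval (tilde n Y))
          \<and> poisson n (peval (tilde n X)) (peval (tilde n Y)) = peval (tilde n (X * Y - Y * X)))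
       \<and> (\<forall>X\<in>sl n. \<forall>\<phi>\<in>Pspace n. rho0 n X \<phi> \<in> Pspace n)
       \<and> (\<forall>X\<in>sl n. \<forall>Y\<in>sl n. \<forall>a b :: complex. \<forall>\<phi>\<in>Pspace n.
            rho0 n (a \<cdot>\<^sub>m X + b \<cdot>\<^sub>m Y) \<phi> = (\<lambda>p. a * rho0 n X \<phi> p + b * rho0 n Y \<phi> p))
       \<and> (\<forall>X\<in>sl n. \<forall>Y\<in>sl n. \<forall>\<phi>\<in>Pspace n.
            rho0 n (X * Y - Y * X) \<phi> = (\<lambda>p. rho0 n X (rho0 n Y \<phi>) p - rho0 n Y (rho0 n X \<phi>) p))"
  using moyal_tilde poisson_tilde rho0_Pspace rho0_linear rho0_commutator by (auto simp: sl_def)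

end
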